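(* Let $J$ be a set and $S_J$ the group of all permutations of $J$, acting on $\ell^\infty(J,\mathbb R)$ by $\sigma.x=x\circ\sigma^{-1}$. Then every $S_J$-invariant non-empty open convex cone in $\ell^\infty(J,\mathbb R)$ contains a constant function.
   Context: $\ell^\infty(J,\mathbb R)$ is the Banach space of bounded real functions on $J$ with the sup norm. A convex cone $W$ satisfies $W+W\subseteq W$ and $tW\subseteq W$ for all $t>0$. *)

theory Defs
  imports "HOL-Analysis.Analysis"
begin

definition linf :: "('j \<Rightarrow> real) set" where
  "linf = {x. bdd_above (range (\<lambda>j. \<bar>x j\<bar>))}"

definition linf_norm :: "('j \<Rightarrow> real) \<Rightarrow> real" where
  "linf_norm x = (SUP j. \<bar>x j\<bar>)"

definition linf_open :: "('j \<Rightarrow> real) set \<Rightarrow> bool" where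
  "linf_open W \<longleftrightarrow> W \<subseteq> linf \<and>
     (\<forall>x\<in>W. \<exists>e>0. \<forall>y\<in>linf. linf_norm (\<lambda>j. y j - x j) < e \<longrightarrow> y \<in> W)"

definition convex_cone_pos :: "('j \<Rightarrow> real) set \<Rightarrow> bool" where
  "convex_cone_pos W \<longleftrightarrow> (\<forall>x\<in>W. \<forall>y\<in>W. (\<lambda>j. x j + y j) \<in> W) \<and>
     (\<forall>x\<in>W. \<forall>t>0. (\<lambda>j. t * x j) \<in> W)"

definition perm_invariant :: "('j \<Rightarrow> real) set \<Rightarrow> bool" where
  "perm_invariant W \<longleftrightarrow> (\<forall>\<sigma>::'j \<Rightarrow> 'j. bij \<sigma> \<longrightarrow> (\<forall>x\<in>W. x \<circ> inv \<sigma> \<in> W))"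

end

theory Submission
  imports Defs
begin

text \<open>
  Let x \<in> W with a uniform neighbourhood of radius e inside W. If finitely many permutations
  \<sigma>_i make the average of the x \<circ> \<sigma>_i uniformly e-close to a constant c, then W contains
  a constant: each x \<circ> \<sigma>_i plus the error term lies in W by invariance, and the sum of these
  is a multiple of c. For finite J the average over all permutations is exactly constant.
  For infinite J some level set L = {j. \<bar>x j - c\<bar> < \<delta>} has cardinality |J|, so it contains
  N disjoint copies of its complement; swapping the complement with the i-th copy gives
  permutations \<tau>_i such that for every j at most one \<tau>_i j leaves L, and the average is then
  within \<delta> + (sup |x| + |c|)/N of c.
\<close>

unbundle cardinal_syntax

lemma linf_open_imp_uniform_nbhd:
  assumes "linf_open W" and "x \<in> W"
  shows "\<exists>e>0. \<forall>y. (\<forall>j. \<bar>y j - x j\<bar> \<le> e) \<longrightarrow> y \<in> W"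
proof -
  obtain e where e: "e > 0" and ball: "\<forall>y\<in>linf. linf_norm (\<lambda>j. y j - x j) < e \<longrightarrow> y \<in> W"
    using assms unfolding linf_open_def by blast
  obtain M where M: "\<And>j. \<bar>x j\<bar> \<le> M"
    using assms unfolding linf_open_def linf_def bdd_above_def by fastforce
  have "y \<in> W" if y: "\<forall>j. \<bar>y j - x j\<bar> \<le> e / 2" for y
  proof -
    have "\<bar>y j\<bar> \<le> M + e / 2" for j
      using M[of j] y[rule_format, of j] by linarith
    then have "y \<in> linf"
      unfolding linf_def by (auto intro!: bdd_aboveI[of _ "M + e / 2"])
    moreover have "linf_norm (\<lambda>j. y j - x j) \<le> e / 2"
      unfolding linf_norm_def using y by (intro cSUP_least) auto
    ultimately show ?thesis
      using ball e by fastforce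
  qed
  then show ?thesis
    using e by (intro exI[of _ "e / 2"]) auto
qed

lemma perm_invariant_comp:
  assumes "perm_invariant W" and "bij \<sigma>" and "y \<in> W"
  shows "y \<circ> \<sigma> \<in> W"
proof -
  have "y \<circ> inv (inv \<sigma>) \<in> W"
    using assms bij_imp_bij_inv unfolding perm_invariant_def by blast
  then show ?thesis
    using assms(2) by (simp add: inv_inv_eq)
qed

lemma convex_cone_pos_sum:
  assumes "convex_cone_pos W" and "finite I" and "I \<noteq> {}" and "\<forall>i\<in>I. f i \<in> W"
  shows "(\<lambda>j. \<Sum>i\<in>I. f i j) \<in> W"
  using assms(2-4)
proof (induction I rule: finite_ne_induct)
  case (singleton i)
  then show ?case by simp
next
  case (insert i I)
  then show ?case
    using assms(1) unfolding convex_cone_pos_def by simp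
qed

lemma const_in_cone_if_average_near_const:
  fixes \<sigma> :: "'i \<Rightarrow> 'j \<Rightarrow> 'j"
  assumes cone: "convex_cone_pos W" and inv: "perm_invariant W"
    and nbhd: "\<forall>y. (\<forall>j. \<bar>y j - x j\<bar> \<le> e) \<longrightarrow> y \<in> W"
    and I: "finite I" "I \<noteq> {}" and bij: "\<forall>i\<in>I. bij (\<sigma> i)"
    and near: "\<forall>j. \<bar>c - (\<Sum>i\<in>I. x (\<sigma> i j)) / card I\<bar> \<le> e"
  shows "\<exists>c. (\<lambda>_. c) \<in> W"
proof -
  define d where "d j = c - (\<Sum>i\<in>I. x (\<sigma> i j)) / card I" for j
  have "(\<lambda>j. x (\<sigma> i j) + d j) \<in> W" if "i \<in> I" for i
  proof -
    have "(\<lambda>j. x j + d (inv (\<sigma> i) j)) \<in> W"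
      by (rule nbhd[rule_format]) (simp add: d_def near)
    then have "(\<lambda>j. x j + d (inv (\<sigma> i) j)) \<circ> \<sigma> i \<in> W"
      using perm_invariant_comp[OF inv] bij that by blast
    moreover have "inv (\<sigma> i) \<circ> \<sigma> i = id"
      using bij that by (simp add: bij_is_inj)
    ultimately show ?thesis
      by (simp add: fun_eq_iff comp_def)
  qed
  then have "(\<lambda>j. \<Sum>i\<in>I. x (\<sigma> i j) + d j) \<in> W"
    by (intro convex_cone_pos_sum[OF cone I]) blast
  moreover have "(\<Sum>i\<in>I. x (\<sigma> i j) + d j) = card I * c" for j
  proof -
    have "(\<Sum>i\<in>I. x (\<sigma> i j) + d j) = (\<Sum>i\<in>I. x (\<sigma> i j)) + card I * d j"
      by (simp add: sum.distrib)
    also have "\<dots> = card I * c"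
      using I unfolding d_def by (simp add: field_simps)
    finally show ?thesis .
  qed
  ultimately show ?thesis
    by auto
qed

lemma sum_permutations_apply_eq:
  assumes "j \<in> S" and "k \<in> S"
  shows "(\<Sum>p | p permutes S. x (p j)) = (\<Sum>p | p permutes S. x (p k))"
  using sum_permutations_compose_right[OF permutes_swap_id[OF assms], of "\<lambda>p. x (p j)"]
  by simp

lemma finite_ex_perms_average_const:
  fixes x :: "'a \<Rightarrow> real"
  assumes "finite (UNIV :: 'a set)"
  shows "\<exists>(P :: ('a \<Rightarrow> 'a) set) c. finite P \<and> P \<noteq> {} \<and> (\<forall>p\<in>P. bij p) \<and>
           (\<forall>j. (\<Sum>p\<in>P. x (p j)) / card P = c)"
proof -
  define P where "P = {p :: 'a \<Rightarrow> 'a. p permutes UNIV}"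
  have "finite P" "P \<noteq> {}" "\<forall>p\<in>P. bij p"
    using assms finite_permutations permutes_id permutes_bij unfolding P_def by blast+
  moreover have "(\<Sum>p\<in>P. x (p j)) = (\<Sum>p\<in>P. x (p undefined))" for j
    unfolding P_def by (rule sum_permutations_apply_eq) auto
  ultimately show ?thesis
    by (intro exI[of _ P] exI[of _ "(\<Sum>p\<in>P. x (p undefined)) / card P"]) simp
qed

lemma finite_card_of_ordLess_infinite:
  assumes "finite A" and "\<not> finite C"
  shows "|A| <o |C|"
  using finite_ordLess_infinite[of "|A|" "|C|"] assms card_of_Well_order Field_card_of by metis

lemma finite_UNION_ordLess_infinite:
  assumes "finite I" and "\<not> finite C" and "\<forall>i\<in>I. |A i| <o |C|"
  shows "|\<Union>i\<in>I. A i| <o |C|"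
  using assms
proof (induction I rule: finite_induct)
  case empty
  then show ?case
    using finite_card_of_ordLess_infinite[of "{}" C] by simp
next
  case (insert i I)
  then show ?case
    using card_of_Un_ordLess_infinite[of C "A i" "\<Union>i\<in>I. A i"] by simp
qed

lemma ex_large_part_of_finite_cover:
  assumes "finite I" and "\<not> finite (UNIV :: 'a set)" and "(\<Union>i\<in>I. A i) = (UNIV :: 'a set)"
  shows "\<exists>i\<in>I. |UNIV :: 'a set| \<le>o |A i|"
  using finite_UNION_ordLess_infinite[OF assms(1,2), of A] assms(3)
  by (metis card_of_Well_order not_ordLeq_iff_ordLess ordLess_irreflexive)

lemma ex_large_level_set:
  fixes x :: "'a \<Rightarrow> real"
  assumes "\<not> finite (UNIV :: 'a set)" and M: "\<And>j. \<bar>x j\<bar> \<le> M" and "\<delta> > 0"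
  shows "\<exists>c. |UNIV :: 'a set| \<le>o |{j. \<bar>x j - c\<bar> < \<delta>}|"
proof -
  define q where "q j = \<lfloor>x j / \<delta>\<rfloor>" for j
  have "-M / \<delta> \<le> x j / \<delta> \<and> x j / \<delta> \<le> M / \<delta>" for j
    using M[of j] \<open>\<delta> > 0\<close> divide_right_mono[of "-M" "x j" \<delta>] divide_right_mono[of "x j" M \<delta>]
    by (simp add: abs_le_iff)
  then have "range q \<subseteq> {\<lfloor>-M / \<delta>\<rfloor>..\<lfloor>M / \<delta>\<rfloor>}"
    unfolding q_def by (simp add: image_subset_iff floor_mono)
  then have "finite (range q)"
    using finite_subset by blast
  then obtain k where large: "|UNIV :: 'a set| \<le>o |{j. q j = k}|"
    using ex_large_part_of_finite_cover[OF _ assms(1), of "range q" "\<lambda>k. {j. q j = k}"] by auto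
  have "{j. q j = k} \<subseteq> {j. \<bar>x j - k * \<delta>\<bar> < \<delta>}"
    using \<open>\<delta> > 0\<close> unfolding q_def
    by (auto simp: floor_eq_iff pos_le_divide_eq pos_divide_less_eq algebra_simps)
  then show ?thesis
    using large card_of_mono1 ordLeq_transitive by blast
qed

lemma ex_inj_times_into_large_set:
  assumes "\<not> finite (UNIV :: 'a set)" and "|UNIV :: 'a set| \<le>o |L|"
  shows "\<exists>f. inj_on f ((B :: 'a set) \<times> {..<N :: nat}) \<and> f ` (B \<times> {..<N}) \<subseteq> L"
proof (cases "N = 0")
  case True
  then show ?thesis
    by auto
next
  case False
  have "|{..<N}| \<le>o |UNIV :: 'a set|"
    by (rule ordLess_imp_ordLeq, rule finite_card_of_ordLess_infinite) (simp_all add: assms(1))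
  then have "|(UNIV :: 'a set) \<times> {..<N}| =o |UNIV :: 'a set|"
    using card_of_Times_infinite[OF assms(1), of "{..<N}"] False by auto
  moreover have "|B \<times> {..<N}| \<le>o |(UNIV :: 'a set) \<times> {..<N}|"
    by (rule card_of_mono1) auto
  ultimately have "|B \<times> {..<N}| \<le>o |L|"
    using assms(2) ordLeq_ordIso_trans ordLeq_transitive by blast
  then show ?thesis
    by (simp add: card_of_ordLeq[symmetric])
qed

lemma ex_perms_leaving_large_set_at_most_once:
  assumes "\<not> finite (UNIV :: 'a set)" and "|UNIV :: 'a set| \<le>o |L|"
  shows "\<exists>\<tau> :: nat \<Rightarrow> 'a \<Rightarrow> 'a. (\<forall>i<N. bij (\<tau> i)) \<and>
           (\<forall>j. \<forall>i<N. \<forall>i'<N. \<tau> i j \<notin> L \<longrightarrow> \<tau> i' j \<notin> L \<longrightarrow> i = i')"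
proof -
  define B where "B = - L"
  obtain f where f_inj: "inj_on f (B \<times> {..<N})" and f_L: "f ` (B \<times> {..<N}) \<subseteq> L"
    using ex_inj_times_into_large_set[OF assms] by blast
  define h where "h i b = f (b, i)" for i b
  \<comment> \<open>The i-th permutation swaps B with the i-th of N disjoint copies of B inside L.\<close>
  define \<tau> where "\<tau> i j = (if j \<in> B then h i j else if j \<in> h i ` B then inv_into B (h i) j else j)"
    for i j
  have h_L: "h i b \<in> L" if "b \<in> B" "i < N" for i b
    using f_L that unfolding h_def by auto
  have h_inj: "inj_on (h i) B" if "i < N" for i
    using f_inj that unfolding h_def inj_on_def by auto
  have "\<tau> i (\<tau> i j) = j" if i: "i < N" for i j
  proof (cases "j \<in> B")
    case True
    then have "h i j \<notin> B"
      using h_L[OF True i] unfolding B_def by simp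
    then show ?thesis
      using True inv_into_f_f[OF h_inj[OF i] True] unfolding \<tau>_def by simp
  next
    case False
    then show ?thesis
      by (cases "j \<in> h i ` B") (simp_all add: \<tau>_def inv_into_into f_inv_into_f)
  qed
  then have bij: "\<forall>i<N. bij (\<tau> i)"
    by (blast intro: involuntory_imp_bij)
  have leaves: "j \<in> h i ` B" if "\<tau> i j \<notin> L" "i < N" for i j
  proof (rule ccontr)
    assume "j \<notin> h i ` B"
    then have "\<tau> i j \<in> L"
      using h_L[OF _ \<open>i < N\<close>] unfolding \<tau>_def B_def by (cases "j \<in> L") simp_all
    then show False
      using that(1) by simp
  qed
  have "i = i'" if ii': "i < N" "i' < N" "\<tau> i j \<notin> L" "\<tau> i' j \<notin> L" for i i' j
  proof -
    obtain b where "b \<in> B" "j = f (b, i)"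
      using leaves[OF ii'(3,1)] unfolding h_def by blast
    moreover obtain b' where "b' \<in> B" "j = f (b', i')"
      using leaves[OF ii'(4,2)] unfolding h_def by blast
    ultimately show ?thesis
      using inj_onD[OF f_inj] \<open>i < N\<close> \<open>i' < N\<close> by blast
  qed
  with bij show ?thesis
    by (intro exI[of _ \<tau>]) simp
qed

lemma abs_sum_le_with_one_exception:
  fixes a :: "'i \<Rightarrow> real" and \<delta> R :: real
  assumes "finite I" and "0 \<le> \<delta>" and "0 \<le> R" and bound: "\<forall>i\<in>I. \<bar>a i\<bar> \<le> R"
    and one: "\<forall>i\<in>I. \<forall>i'\<in>I. \<delta> \<le> \<bar>a i\<bar> \<longrightarrow> \<delta> \<le> \<bar>a i'\<bar> \<longrightarrow> i = i'"
  shows "\<bar>\<Sum>i\<in>I. a i\<bar> \<le> card I * \<delta> + R"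
proof -
  define E where "E = {i\<in>I. \<delta> \<le> \<bar>a i\<bar>}"
  have "card E \<le> 1"
    using one \<open>finite I\<close> unfolding E_def One_nat_def by (subst card_le_Suc0_iff_eq) auto
  have "\<bar>\<Sum>i\<in>I. a i\<bar> \<le> (\<Sum>i\<in>I. \<delta> + (if i \<in> E then R else 0))"
    using bound \<open>0 \<le> \<delta>\<close> \<open>0 \<le> R\<close> unfolding E_def
    by (intro order.trans[OF sum_abs] sum_mono) auto
  also have "\<dots> = card I * \<delta> + card E * R"
    using \<open>finite I\<close> unfolding E_def by (simp add: sum.distrib sum.If_cases Int_def)
  also have "\<dots> \<le> card I * \<delta> + R"
    using \<open>card E \<le> 1\<close> \<open>0 \<le> R\<close> by (simp add: mult_left_le_one_le)
  finally show ?thesis .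
qed

lemma infinite_ex_perms_average_near_const:
  fixes x :: "'a \<Rightarrow> real"
  assumes inf: "\<not> finite (UNIV :: 'a set)" and M: "\<And>j. \<bar>x j\<bar> \<le> M" and "e > 0"
  shows "\<exists>(I :: nat set) (\<tau> :: nat \<Rightarrow> 'a \<Rightarrow> 'a) c. finite I \<and> I \<noteq> {} \<and> (\<forall>i\<in>I. bij (\<tau> i)) \<and>
           (\<forall>j. \<bar>c - (\<Sum>i\<in>I. x (\<tau> i j)) / card I\<bar> \<le> e)"
proof -
  define \<delta> where "\<delta> = e / 2"
  have "\<delta> > 0"
    using \<open>e > 0\<close> unfolding \<delta>_def by simp
  then obtain c where "|UNIV :: 'a set| \<le>o |{j. \<bar>x j - c\<bar> < \<delta>}|"
    using ex_large_level_set[of x M \<delta>, OF inf M] by blast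
  moreover define L where "L = {j. \<bar>x j - c\<bar> < \<delta>}"
  ultimately have large: "|UNIV :: 'a set| \<le>o |L|"
    by simp
  define R where "R = M + \<bar>c\<bar>"
  have R: "\<bar>x j - c\<bar> \<le> R" for j
    using M[of j] unfolding R_def by linarith
  have "0 \<le> R"
    using R[of undefined] by linarith
  define N where "N = nat \<lceil>R / \<delta>\<rceil> + 1"
  have "N > 0"
    unfolding N_def by simp
  have "R / \<delta> \<le> N"
    unfolding N_def by linarith
  then have "R \<le> N * \<delta>"
    using \<open>\<delta> > 0\<close> by (simp add: pos_divide_le_eq)
  obtain \<tau> :: "nat \<Rightarrow> 'a \<Rightarrow> 'a" where bij: "\<forall>i<N. bij (\<tau> i)"
    and once: "\<forall>j. \<forall>i<N. \<forall>i'<N. \<tau> i j \<notin> L \<longrightarrow> \<tau> i' j \<notin> L \<longrightarrow> i = i'"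
    using ex_perms_leaving_large_set_at_most_once[OF inf large] by blast
  have "\<bar>c - (\<Sum>i<N. x (\<tau> i j)) / N\<bar> \<le> e" for j
  proof -
    have "\<forall>i\<in>{..<N}. \<forall>i'\<in>{..<N}. \<delta> \<le> \<bar>x (\<tau> i j) - c\<bar> \<longrightarrow> \<delta> \<le> \<bar>x (\<tau> i' j) - c\<bar> \<longrightarrow> i = i'"
      using once unfolding L_def by (simp add: not_less)
    then have "\<bar>\<Sum>i<N. x (\<tau> i j) - c\<bar> \<le> N * \<delta> + R"
      using abs_sum_le_with_one_exception[of "{..<N}" \<delta> R] R \<open>\<delta> > 0\<close> \<open>0 \<le> R\<close> by simp
    also have "\<dots> \<le> N * e"
      using \<open>R \<le> N * \<delta>\<close> unfolding \<delta>_def by simp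
    finally have "\<bar>N * c - (\<Sum>i<N. x (\<tau> i j))\<bar> \<le> N * e"
      by (simp add: sum_subtractf abs_minus_commute)
    moreover have "c - (\<Sum>i<N. x (\<tau> i j)) / N = (N * c - (\<Sum>i<N. x (\<tau> i j))) / N"
      using \<open>N > 0\<close> by (simp add: field_simps)
    ultimately show ?thesis
      using \<open>N > 0\<close> by (simp add: abs_divide pos_divide_le_eq mult.commute)
  qed
  then have "finite {..<N} \<and> {..<N} \<noteq> {} \<and> (\<forall>i\<in>{..<N}. bij (\<tau> i)) \<and>
    (\<forall>j. \<bar>c - (\<Sum>i\<in>{..<N}. x (\<tau> i j)) / card {..<N}\<bar> \<le> e)"
    using bij \<open>N > 0\<close> by auto
  then show ?thesis
    by blast
qed

theorem lemma4p5:
  fixes W :: "('j \<Rightarrow> real) set"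
  assumes "W \<noteq> {}"
    and "linf_open W"
    and "convex_cone_pos W"
    and "perm_invariant W"
  shows "\<exists>c::real. (\<lambda>_. c) \<in> W"
proof -
  obtain x where "x \<in> W"
    using assms(1) by blast
  then obtain e where "e > 0" and nbhd: "\<forall>y. (\<forall>j. \<bar>y j - x j\<bar> \<le> e) \<longrightarrow> y \<in> W"
    using linf_open_imp_uniform_nbhd[OF assms(2)] by blast
  note const_in_cone = const_in_cone_if_average_near_const[OF assms(3,4) nbhd]
  show ?thesis
  proof (cases "finite (UNIV :: 'j set)")
    case True
    obtain P :: "('j \<Rightarrow> 'j) set" and c where "finite P" "P \<noteq> {}" "\<forall>p\<in>P. bij p"
      and "\<forall>j. (\<Sum>p\<in>P. x (p j)) / card P = c"
      using finite_ex_perms_average_const[of x, OF True] by blast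
    then show ?thesis
      using \<open>e > 0\<close> by (intro const_in_cone[of P "\<lambda>p. p" c]) auto
  next
    case False
    obtain M where M: "\<And>j. \<bar>x j\<bar> \<le> M"
      using \<open>x \<in> W\<close> assms(2) unfolding linf_open_def linf_def bdd_above_def by fastforce
    obtain I :: "nat set" and \<tau> :: "nat \<Rightarrow> 'j \<Rightarrow> 'j" and c where "finite I" "I \<noteq> {}" "\<forall>i\<in>I. bij (\<tau> i)"
      and "\<forall>j. \<bar>c - (\<Sum>i\<in>I. x (\<tau> i j)) / card I\<bar> \<le> e"
      using infinite_ex_perms_average_near_const[of x M e, OF False M \<open>e > 0\<close>] by blast
    then show ?thesis
      by (rule const_in_cone)
  qed
qed

end
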